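(* Let $\kappa$ be an uncountable regular cardinal, $U$ an unbounded subset of $\kappa$, and $T$ a subtree of ${}^{<\kappa}\kappa$. If $\mu$ is a cardinal with $\mu^{<\kappa}<|[T]|$ and $c:{}^\kappa\mu\to[T]$ is a continuous surjection, then there are a strictly increasing sequence $\langle\lambda_n\in U : n<\omega\rangle$ with least upper bound $\lambda$ and an injection $i:\prod_{n<\omega}\lambda_n\to T(\lambda)$ such that for all $x,y\in\prod_{n<\omega}\lambda_n$ and all $n<\omega$: $x\restriction n=y\restriction n$ if and only if $i(x)\restriction\lambda_n=i(y)\restriction\lambda_n$.
   Context: ${}^{<\kappa}\kappa$ is the set of functions from ordinals $\alpha<\kappa$ to $\kappa$, ordered by inclusion; a subtree is a subset closed under restrictions to smaller ordinals. $[T]$ is the set of $x\in{}^\kappa\kappa$ with $x\restriction\alpha\in T$ for all $\alpha<\kappa$, with the subspace topology of ${}^\kappa\kappa$. $T(\lambda)$ denotes the set of nodes of $T$ of length $\lambda$. For a cardinal $\nu$, ${}^\kappa\nu$ carries the topology with basic open sets $N_s=\{x\in{}^\kappa\nu : s\subseteq x\}$ for $s$ a function from an ordinal below $\kappa$ to $\nu$. *)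

theory Defs
  imports "HOL-Analysis.Analysis" "HOL-Library.Countable_Set"
begin

text \<open>The cardinal kappa is modelled as a well-ordered type 'k whose order type
is kappa: the elements of 'k are the ordinals below kappa.  A function from an
ordinal alpha < kappa to a set X is a partial map with domain exactly the
initial segment below alpha.\<close>

definition seqs_below :: "('k::wellorder \<rightharpoonup> 'b) set" where
  "seqs_below = {s. \<exists>\<alpha>. dom s = {..<\<alpha>}}"

definition restr_p :: "('k::wellorder \<rightharpoonup> 'b) \<Rightarrow> 'k \<Rightarrow> ('k \<rightharpoonup> 'b)" where
  "restr_p s \<alpha> = (\<lambda>\<beta>. if \<beta> < \<alpha> then s \<beta> else None)"

definition restr :: "('k::wellorder \<Rightarrow> 'b) \<Rightarrow> 'k \<Rightarrow> ('k \<rightharpoonup> 'b)" where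
  "restr x \<alpha> = (\<lambda>\<beta>. if \<beta> < \<alpha> then Some (x \<beta>) else None)"

definition is_subtree :: "('k::wellorder \<rightharpoonup> 'b) set \<Rightarrow> bool" where
  "is_subtree T \<longleftrightarrow> T \<subseteq> seqs_below \<and> (\<forall>s\<in>T. \<forall>\<alpha>. restr_p s \<alpha> \<in> T)"

definition body :: "('k::wellorder \<rightharpoonup> 'b) set \<Rightarrow> ('k \<Rightarrow> 'b) set" where
  "body T = {x. \<forall>\<alpha>. restr x \<alpha> \<in> T}"

definition level :: "('k::wellorder \<rightharpoonup> 'b) set \<Rightarrow> 'k \<Rightarrow> ('k \<rightharpoonup> 'b) set" where
  "level T lam = {s\<in>T. dom s = {..<lam}}"

definition basic_nbhd :: "('k::wellorder \<rightharpoonup> 'b) \<Rightarrow> ('k \<Rightarrow> 'b) set" where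
  "basic_nbhd s = {x. \<forall>\<beta>\<in>dom s. s \<beta> = Some (x \<beta>)}"

definition kappa_top :: "('k::wellorder \<Rightarrow> 'b) topology" where
  "kappa_top = topology (arbitrary union_of (\<lambda>U. \<exists>s\<in>seqs_below. U = basic_nbhd s))"

definition unbounded :: "'k::wellorder set \<Rightarrow> bool" where
  "unbounded U \<longleftrightarrow> (\<forall>\<alpha>. \<exists>\<beta>\<in>U. \<alpha> \<le> \<beta>)"

definition is_cardinal_type :: "'k::wellorder itself \<Rightarrow> bool" where
  "is_cardinal_type _ \<longleftrightarrow>
     (\<forall>\<alpha>::'k. (card_of {..<\<alpha>}, card_of (UNIV::'k set)) \<in> ordLess)"

definition regular_uncountable_type :: "'k::wellorder itself \<Rightarrow> bool" where
  "regular_uncountable_type t \<longleftrightarrow> is_cardinal_type t \<and> uncountable (UNIV::'k set) \<and>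
     (\<forall>A::'k set. unbounded A \<longrightarrow> (card_of A, card_of (UNIV::'k set)) \<in> ordIso)"

end

theory Submission
  imports Defs
begin

text \<open>
  Call a node s (a sequence in \<mu> of length below \<kappa>) big if c maps the basic open set N s onto more
  than \<mu>^<\<kappa> = |seqs_below| points; the root is big because |[T]| > \<mu>^<\<kappa>. Below a big
  node all but \<mu>^<\<kappa> image points are good: every basic neighbourhood of each of their
  preimages is big. Given fewer than \<kappa> big nodes and an ordinal l < \<kappa>, choose l distinct good
  points under each of them; by regularity they pairwise differ below some l' \<in> U, and continuity
  turns them into big extensions of the nodes whose images are fixed up to l' and pairwise
  separated there. Iterating this \<omega> times yields a tree of nodes indexed by finite sequences
  below the \<lambda>(n); along a branch x the nodes converge to a point Y x, and i x = c (Y x) restricted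
  to \<lambda> = sup \<lambda>(n) is the required injection (\<lambda> < \<kappa> because \<kappa> has uncountable cofinality).
\<close>

unbundle cardinal_syntax

section \<open>Basic open sets\<close>

lemma restr_in_seqs_below: "restr x \<alpha> \<in> seqs_below"
  unfolding seqs_below_def restr_def by (auto simp: dom_def intro!: exI[of _ \<alpha>])

lemma dom_restr: "dom (restr x \<alpha>) = {..<\<alpha>}"
  unfolding restr_def by (auto simp: dom_def)

lemma restr_p_restr: "\<beta> \<le> \<alpha> \<Longrightarrow> restr_p (restr x \<alpha>) \<beta> = restr x \<beta>"
  unfolding restr_def restr_p_def by (auto simp: fun_eq_iff)

lemma restr_in_level: "x \<in> body T \<Longrightarrow> restr x \<alpha> \<in> level T \<alpha>"
  unfolding body_def level_def by (simp add: dom_restr)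

lemma restr_eq_iff: "restr x \<alpha> = restr y \<alpha> \<longleftrightarrow> (\<forall>\<beta><\<alpha>. x \<beta> = y \<beta>)"
  unfolding restr_def by (auto simp: fun_eq_iff)

lemma restr_eq_mono: "restr x \<alpha> = restr y \<alpha> \<Longrightarrow> \<beta> \<le> \<alpha> \<Longrightarrow> restr x \<beta> = restr y \<beta>"
  by (auto simp: restr_eq_iff)

lemma restr_inj: "restr x \<alpha> = restr x \<beta> \<Longrightarrow> \<alpha> = \<beta>"
  by (metis dom_restr lessThan_eq_iff)

lemma mem_basic_nbhd_restr: "y \<in> basic_nbhd (restr x \<alpha>) \<longleftrightarrow> (\<forall>\<beta><\<alpha>. y \<beta> = x \<beta>)"
  unfolding basic_nbhd_def restr_def by (auto simp: dom_def)

lemma seqs_below_eq_restr: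
  assumes "dom s = {..<\<alpha>}" "y \<in> basic_nbhd s"
  shows "s = restr y \<alpha>"
proof
  fix \<beta> show "s \<beta> = restr y \<alpha> \<beta>"
    using assms unfolding basic_nbhd_def restr_def by (cases "\<beta> < \<alpha>") auto
qed

lemma basic_nbhd_Int_cases:
  assumes "s \<in> seqs_below" "t \<in> seqs_below"
  shows "basic_nbhd s \<inter> basic_nbhd t \<in> {{}, basic_nbhd s, basic_nbhd t}"
proof (cases "basic_nbhd s \<inter> basic_nbhd t = {}")
  case False
  then obtain y where y: "y \<in> basic_nbhd s" "y \<in> basic_nbhd t" by auto
  obtain \<alpha> \<beta> where "dom s = {..<\<alpha>}" "dom t = {..<\<beta>}"
    using assms unfolding seqs_below_def by auto
  with y have "s = restr y \<alpha>" "t = restr y \<beta>" using seqs_below_eq_restr by blast+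
  then have "basic_nbhd t \<subseteq> basic_nbhd s \<or> basic_nbhd s \<subseteq> basic_nbhd t"
    by (cases "\<alpha> \<le> \<beta>") (auto simp: mem_basic_nbhd_restr)
  then show ?thesis by blast
qed simp

lemma openin_kappa_top:
  "openin (kappa_top :: ('k::wellorder \<Rightarrow> 'b) topology) =
     arbitrary union_of (\<lambda>W. \<exists>s\<in>seqs_below. W = basic_nbhd s)"
proof -
  have "istopology (arbitrary union_of (\<lambda>W. \<exists>s\<in>seqs_below. W = basic_nbhd (s :: 'k \<rightharpoonup> 'b)))"
    unfolding istopology_base_eq
  proof (intro allI impI)
    fix V W :: "('k \<Rightarrow> 'b) set"
    assume "(\<exists>s\<in>seqs_below. V = basic_nbhd s) \<and> (\<exists>t\<in>seqs_below. W = basic_nbhd t)"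
    then obtain s t where "s \<in> seqs_below" "t \<in> seqs_below" "V = basic_nbhd s" "W = basic_nbhd t"
      by blast
    then show "(arbitrary union_of (\<lambda>W. \<exists>s\<in>seqs_below. W = basic_nbhd s)) (V \<inter> W)"
      using basic_nbhd_Int_cases[of s t]
      by (auto simp: arbitrary_union_of_empty intro: arbitrary_union_of_inc)
  qed
  then show ?thesis
    unfolding kappa_top_def by (rule topology_inverse')
qed

lemma openin_basic_nbhd: "s \<in> seqs_below \<Longrightarrow> openin kappa_top (basic_nbhd s)"
  unfolding openin_kappa_top by (rule arbitrary_union_of_inc) auto

lemma openin_kappa_top_basic_nbhd:
  assumes "openin kappa_top W" "y \<in> W"
  shows "\<exists>r\<in>seqs_below. y \<in> basic_nbhd r \<and> basic_nbhd r \<subseteq> W"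
  using assms unfolding openin_kappa_top union_of_def arbitrary_def by blast

lemma Map_empty_in_seqs_below: "Map.empty \<in> seqs_below"
proof -
  have "dom Map.empty = {..<(LEAST \<alpha>::'k::wellorder. True)}"
    using not_less_Least[of _ "\<lambda>_. True"] by auto
  then show ?thesis unfolding seqs_below_def by blast
qed

lemma basic_nbhd_empty [simp]: "basic_nbhd Map.empty = UNIV"
  unfolding basic_nbhd_def by auto

lemma topspace_kappa_top [simp]: "topspace kappa_top = UNIV"
  using openin_basic_nbhd[OF Map_empty_in_seqs_below] openin_subset by auto

lemma continuous_map_kappa_top_restr:
  assumes cont: "continuous_map kappa_top kappa_top c"
    and s: "s \<in> seqs_below" and y: "y \<in> basic_nbhd s"
  shows "\<exists>r\<in>seqs_below. s \<subseteq>\<^sub>m r \<and> y \<in> basic_nbhd r \<and>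
           (\<forall>y'\<in>basic_nbhd r. restr (c y') \<beta> = restr (c y) \<beta>)"
proof -
  have "openin kappa_top {x. c x \<in> basic_nbhd (restr (c y) \<beta>)}"
    using openin_continuous_map_preimage[OF cont openin_basic_nbhd[OF restr_in_seqs_below]]
    by simp
  moreover have "y \<in> {x. c x \<in> basic_nbhd (restr (c y) \<beta>)}"
    by (simp add: mem_basic_nbhd_restr)
  ultimately obtain r0 where r0: "r0 \<in> seqs_below" "y \<in> basic_nbhd r0"
    "basic_nbhd r0 \<subseteq> {x. c x \<in> basic_nbhd (restr (c y) \<beta>)}"
    using openin_kappa_top_basic_nbhd by blast
  obtain \<alpha>1 \<alpha>2 where "dom s = {..<\<alpha>1}" "dom r0 = {..<\<alpha>2}"
    using s r0(1) unfolding seqs_below_def by auto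
  with y r0(2) have s_eq: "s = restr y \<alpha>1" and r0_eq: "r0 = restr y \<alpha>2"
    using seqs_below_eq_restr by blast+
  define r where "r = restr y (max \<alpha>1 \<alpha>2)"
  have "basic_nbhd r \<subseteq> basic_nbhd r0"
    unfolding r_def r0_eq by (auto simp: mem_basic_nbhd_restr less_max_iff_disj)
  with r0(3) have "\<forall>y'\<in>basic_nbhd r. restr (c y') \<beta> = restr (c y) \<beta>"
    by (auto simp: mem_basic_nbhd_restr restr_eq_iff)
  moreover have "s \<subseteq>\<^sub>m r"
    unfolding s_eq r_def map_le_def restr_def by (auto simp: dom_def less_max_iff_disj)
  moreover have "r \<in> seqs_below" "y \<in> basic_nbhd r"
    unfolding r_def by (simp_all add: restr_in_seqs_below mem_basic_nbhd_restr)
  ultimately show ?thesis by blast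
qed

lemma card_of_UNIV_ordLeq_seqs_below:
  "|UNIV :: 'k::wellorder set| \<le>o |seqs_below :: ('k \<rightharpoonup> 'b) set|"
  unfolding card_of_ordLeq[symmetric]
  by (rule exI[of _ "restr (\<lambda>_. undefined)"]) (auto intro: inj_onI restr_inj restr_in_seqs_below)

section \<open>Big nodes and good points\<close>

definition big :: "(('k::wellorder \<Rightarrow> 'm) \<Rightarrow> ('k \<Rightarrow> 'b)) \<Rightarrow> ('k \<rightharpoonup> 'm) \<Rightarrow> bool" where
  "big c s \<longleftrightarrow> |seqs_below :: ('k \<rightharpoonup> 'm) set| <o |c ` basic_nbhd s|"

definition good_points ::
    "(('k::wellorder \<Rightarrow> 'm) \<Rightarrow> ('k \<Rightarrow> 'b)) \<Rightarrow> ('k \<rightharpoonup> 'm) \<Rightarrow> ('k \<Rightarrow> 'b) set" where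
  "good_points c s = {z \<in> c ` basic_nbhd s. \<forall>r\<in>seqs_below. z \<in> c ` basic_nbhd r \<longrightarrow> big c r}"

definition determines :: "(('k::wellorder \<Rightarrow> 'm) \<Rightarrow> ('k \<Rightarrow> 'b)) \<Rightarrow> ('k \<rightharpoonup> 'm) \<Rightarrow> 'k \<Rightarrow> bool" where
  "determines c s l \<longleftrightarrow> (\<forall>y\<in>basic_nbhd s. \<forall>y'\<in>basic_nbhd s. restr (c y) l = restr (c y') l)"

definition separates ::
    "(('k::wellorder \<Rightarrow> 'm) \<Rightarrow> ('k \<Rightarrow> 'b)) \<Rightarrow> ('k \<rightharpoonup> 'm) \<Rightarrow> ('k \<rightharpoonup> 'm) \<Rightarrow> 'k \<Rightarrow> bool" where
  "separates c s t l \<longleftrightarrow> (\<forall>y\<in>basic_nbhd s. \<forall>y'\<in>basic_nbhd t. restr (c y) l \<noteq> restr (c y') l)"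

lemma card_of_good_points:
  fixes c :: "('k::wellorder \<Rightarrow> 'm) \<Rightarrow> ('k \<Rightarrow> 'b)"
  assumes "infinite (UNIV :: 'k set)" and "big c s"
  shows "|seqs_below :: ('k \<rightharpoonup> 'm) set| <o |good_points c s|"
proof (rule ccontr)
  let ?Q = "seqs_below :: ('k \<rightharpoonup> 'm) set"
  assume "\<not> ?thesis"
  then have good: "|good_points c s| \<le>o |?Q|"
    using not_ordLess_iff_ordLeq[OF card_of_Well_order card_of_Well_order] by blast
  have inf: "infinite ?Q"
    using card_of_ordLeq_finite[OF card_of_UNIV_ordLeq_seqs_below] assms(1) by blast
  define bad where "bad = (\<Union>r\<in>{r\<in>?Q. \<not> big c r}. c ` basic_nbhd r)"
  have "|bad| \<le>o |?Q|"
    unfolding bad_def big_def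
    using not_ordLess_iff_ordLeq[OF card_of_Well_order card_of_Well_order]
    by (intro card_of_UNION_ordLeq_infinite[OF inf]) (auto intro: card_of_mono1)
  with good have "|good_points c s \<union> bad| \<le>o |?Q|"
    using card_of_Un_ordLeq_infinite_Field[of "|?Q|"] inf
    by (simp add: Field_card_of card_of_card_order_on)
  moreover have "c ` basic_nbhd s \<subseteq> good_points c s \<union> bad"
    unfolding good_points_def bad_def by auto
  ultimately have "|c ` basic_nbhd s| \<le>o |?Q|"
    using card_of_mono1 ordLeq_transitive by blast
  then show False using assms(2) not_ordLess_ordLeq unfolding big_def by blast
qed

lemma good_points_refine:
  assumes cont: "continuous_map kappa_top kappa_top c"
    and s: "s \<in> seqs_below" and z: "z \<in> good_points c s"
  shows "\<exists>r\<in>seqs_below. s \<subseteq>\<^sub>m r \<and> big c r \<and> (\<forall>y\<in>basic_nbhd r. restr (c y) \<beta> = restr z \<beta>)"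
proof -
  obtain y where y: "y \<in> basic_nbhd s" "z = c y" using z unfolding good_points_def by auto
  from continuous_map_kappa_top_restr[OF cont s y(1)] obtain r where r: "r \<in> seqs_below" "s \<subseteq>\<^sub>m r"
    "y \<in> basic_nbhd r" "\<forall>y'\<in>basic_nbhd r. restr (c y') \<beta> = restr (c y) \<beta>"
    by blast
  moreover have "big c r" using z r(1,3) y(2) unfolding good_points_def by blast
  ultimately show ?thesis using y(2) by blast
qed

section \<open>Splitting systems\<close>

definition bounded_lists :: "(nat \<Rightarrow> 'a::ord) \<Rightarrow> nat \<Rightarrow> 'a list set" where
  "bounded_lists L k = {\<sigma>. length \<sigma> = k \<and> (\<forall>m<k. \<sigma> ! m < L m)}"

lemma length_bounded_lists: "\<sigma> \<in> bounded_lists L k \<Longrightarrow> length \<sigma> = k"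
  unfolding bounded_lists_def by simp

lemma bounded_lists_0 [simp]: "bounded_lists L 0 = {[]}"
  unfolding bounded_lists_def by auto

lemma bounded_lists_Suc:
  "bounded_lists L (Suc k) = (\<lambda>(\<sigma>, a). \<sigma> @ [a]) ` (bounded_lists L k \<times> {..<L k})"
proof (intro equalityI subsetI)
  fix \<tau> assume \<tau>: "\<tau> \<in> bounded_lists L (Suc k)"
  then have "\<tau> \<noteq> []" by (auto simp: bounded_lists_def)
  then have "\<tau> = butlast \<tau> @ [last \<tau>]" by simp
  moreover have "butlast \<tau> \<in> bounded_lists L k" "last \<tau> < L k"
    using \<tau> \<open>\<tau> \<noteq> []\<close> by (auto simp: bounded_lists_def nth_butlast last_conv_nth)
  ultimately show "\<tau> \<in> (\<lambda>(\<sigma>, a). \<sigma> @ [a]) ` (bounded_lists L k \<times> {..<L k})"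
    by (intro image_eqI[of _ _ "(butlast \<tau>, last \<tau>)"]) auto
qed (auto simp: bounded_lists_def nth_append less_Suc_eq)

lemma bounded_lists_cong: "(\<And>m. m < k \<Longrightarrow> L m = L' m) \<Longrightarrow> bounded_lists L k = bounded_lists L' k"
  unfolding bounded_lists_def by auto

lemma map_in_bounded_lists: "x \<in> Pi UNIV (\<lambda>n. {..<L n}) \<Longrightarrow> map x [0..<k] \<in> bounded_lists L k"
  unfolding bounded_lists_def by auto

text \<open>S \<sigma> is the node attached to an index sequence \<sigma> with \<sigma> ! m < L m, and L k is \<lambda>(k).\<close>

fun splitting_level ::
    "(('k::wellorder \<Rightarrow> 'm) \<Rightarrow> ('k \<Rightarrow> 'b)) \<Rightarrow> 'k set \<Rightarrow> (nat \<Rightarrow> 'k) \<Rightarrow> ('k list \<Rightarrow> ('k \<rightharpoonup> 'm)) \<Rightarrow>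
     nat \<Rightarrow> bool" where
  "splitting_level c U L S 0 \<longleftrightarrow>
     L 0 \<in> U \<and> S [] \<in> seqs_below \<and> big c (S []) \<and> determines c (S []) (L 0)"
| "splitting_level c U L S (Suc k) \<longleftrightarrow> L (Suc k) \<in> U \<and> L k < L (Suc k) \<and>
     (\<forall>\<sigma>\<in>bounded_lists L k. \<forall>a<L k. S (\<sigma> @ [a]) \<in> seqs_below \<and> big c (S (\<sigma> @ [a])) \<and>
        S \<sigma> \<subseteq>\<^sub>m S (\<sigma> @ [a]) \<and> determines c (S (\<sigma> @ [a])) (L (Suc k))) \<and>
     (\<forall>\<sigma>\<in>bounded_lists L k. \<forall>a<L k. \<forall>b<L k. a \<noteq> b \<longrightarrow>
        separates c (S (\<sigma> @ [a])) (S (\<sigma> @ [b])) (L (Suc k)))"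

lemma splitting_level_cong:
  assumes "\<forall>m\<le>k. L m = L' m" and "\<forall>\<sigma>. length \<sigma> \<le> k \<longrightarrow> S \<sigma> = S' \<sigma>"
  shows "splitting_level c U L S k \<longleftrightarrow> splitting_level c U L' S' k"
proof (cases k)
  case 0
  with assms show ?thesis by simp
next
  case (Suc j)
  with assms(1) have "bounded_lists L j = bounded_lists L' j"
    by (intro bounded_lists_cong) simp
  moreover have "S \<sigma> = S' \<sigma>" "S (\<sigma> @ [a]) = S' (\<sigma> @ [a])" if "\<sigma> \<in> bounded_lists L j" for \<sigma> a
    using that assms(2) Suc by (simp_all add: length_bounded_lists)
  ultimately show ?thesis
    using Suc assms(1) by (simp cong: ball_cong)
qed

lemma splitting_level_nodes:
  assumes "splitting_level c U L S k" and "\<sigma> \<in> bounded_lists L k"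
  shows "S \<sigma> \<in> seqs_below \<and> big c (S \<sigma>) \<and> determines c (S \<sigma>) (L k)"
  using assms by (cases k) (auto simp: bounded_lists_Suc)

lemma basic_nbhd_chain_common_point:
  fixes s :: "nat \<Rightarrow> ('k::wellorder \<rightharpoonup> 'b)"
  assumes chain: "\<And>n. s n \<subseteq>\<^sub>m s (Suc n)"
  obtains y where "\<And>n. y \<in> basic_nbhd (s n)"
proof -
  have mono: "s m \<subseteq>\<^sub>m s n" if "m \<le> n" for m n
    using that by (induction n rule: dec_induct) (auto intro: map_le_trans chain)
  define y where "y \<beta> = the (s (SOME n. \<beta> \<in> dom (s n)) \<beta>)" for \<beta>
  have "s n \<beta> = Some (y \<beta>)" if \<beta>: "\<beta> \<in> dom (s n)" for n \<beta>
  proof -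
    define m where "m = (SOME n. \<beta> \<in> dom (s n))"
    have "\<beta> \<in> dom (s m)" unfolding m_def using \<beta> by (rule someI)
    then have "s m \<beta> = s n \<beta>"
    proof (cases "m \<le> n")
      case True
      then show ?thesis using mono[OF True] \<open>\<beta> \<in> dom (s m)\<close> unfolding map_le_def by blast
    next
      case False
      then show ?thesis using mono[of n m] \<beta> unfolding map_le_def by simp
    qed
    then show ?thesis using \<beta> unfolding y_def m_def[symmetric] by auto
  qed
  then show thesis by (intro that) (auto simp: basic_nbhd_def)
qed

lemma splitting_levels_strict_mono:
  assumes "\<forall>k. splitting_level c U L S k"
  shows "strict_mono L"
  unfolding strict_mono_Suc_iff
proof
  fix k show "L k < L (Suc k)" using assms[rule_format, of "Suc k"] by simp
qed

lemma splitting_levels_range: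
  assumes "\<forall>k. splitting_level c U L S k"
  shows "range L \<subseteq> U"
proof
  fix l assume "l \<in> range L"
  then obtain k where "l = L k" by blast
  with assms[rule_format, of k] show "l \<in> U" by (cases k) auto
qed

lemma splitting_system_branch_point:
  assumes levels: "\<forall>k. splitting_level c U L S k" and x: "x \<in> Pi UNIV (\<lambda>n. {..<L n})"
  shows "\<exists>z. \<forall>n. z \<in> basic_nbhd (S (map x [0..<n]))"
proof -
  have "S (map x [0..<n]) \<subseteq>\<^sub>m S (map x [0..<Suc n])" for n
    using levels[rule_format, of "Suc n"] map_in_bounded_lists[OF x, of n] x by auto
  then obtain z where "\<And>n. z \<in> basic_nbhd (S (map x [0..<n]))"
    using basic_nbhd_chain_common_point[of "\<lambda>n. S (map x [0..<n])"] by blast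
  then show ?thesis by blast
qed

lemma splitting_system_branches_agree:
  assumes levels: "\<forall>k. splitting_level c U L S k" and x: "x \<in> Pi UNIV (\<lambda>n. {..<L n})"
    and "\<forall>m<n. x m = y m"
    and "z \<in> basic_nbhd (S (map x [0..<n]))" "z' \<in> basic_nbhd (S (map y [0..<n]))"
  shows "restr (c z) (L n) = restr (c z') (L n)"
proof -
  have "map y [0..<n] = map x [0..<n]" using assms(3) by simp
  moreover have "determines c (S (map x [0..<n])) (L n)"
    using splitting_level_nodes levels map_in_bounded_lists[OF x] by blast
  ultimately show ?thesis using assms(4,5) unfolding determines_def by metis
qed

lemma splitting_system_branches_separated:
  assumes levels: "\<forall>k. splitting_level c U L S k"
    and x: "x \<in> Pi UNIV (\<lambda>n. {..<L n})" and y: "y \<in> Pi UNIV (\<lambda>n. {..<L n})"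
    and "\<forall>j<m. x j = y j" and "x m \<noteq> y m"
    and "z \<in> basic_nbhd (S (map x [0..<Suc m]))" "z' \<in> basic_nbhd (S (map y [0..<Suc m]))"
  shows "restr (c z) (L (Suc m)) \<noteq> restr (c z') (L (Suc m))"
proof -
  define \<sigma> where "\<sigma> = map x [0..<m]"
  have "map y [0..<m] = \<sigma>" using assms(4) unfolding \<sigma>_def by simp
  then have z: "z \<in> basic_nbhd (S (\<sigma> @ [x m]))" "z' \<in> basic_nbhd (S (\<sigma> @ [y m]))"
    using assms(6,7) by (simp_all add: \<sigma>_def del: map_eq_conv)
  have "x m < L m" "y m < L m" using x y by auto
  then have "separates c (S (\<sigma> @ [x m])) (S (\<sigma> @ [y m])) (L (Suc m))"
    using levels[rule_format, of "Suc m"] map_in_bounded_lists[OF x, of m] assms(5)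
    unfolding \<sigma>_def splitting_level.simps by blast
  with z show ?thesis unfolding separates_def by blast
qed

lemma splitting_system_branches:
  fixes c :: "('k::wellorder \<Rightarrow> 'm) \<Rightarrow> ('k \<Rightarrow> 'b)"
  assumes levels: "\<forall>k. splitting_level c U L S k"
  obtains Y where "\<And>x y n. x \<in> Pi UNIV (\<lambda>n. {..<L n}) \<Longrightarrow> y \<in> Pi UNIV (\<lambda>n. {..<L n}) \<Longrightarrow>
    (\<forall>m<n. x m = y m) \<longleftrightarrow> restr (c (Y x)) (L n) = restr (c (Y y)) (L n)"
proof -
  let ?P = "Pi UNIV (\<lambda>n. {..<L n})"
  have "\<forall>x\<in>?P. \<exists>z. \<forall>n. z \<in> basic_nbhd (S (map x [0..<n]))"
    using splitting_system_branch_point[OF levels] by blast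
  from bchoice[OF this] obtain Y where "\<forall>x\<in>?P. \<forall>n. Y x \<in> basic_nbhd (S (map x [0..<n]))"
    by blast
  then have Y: "\<And>x n. x \<in> ?P \<Longrightarrow> Y x \<in> basic_nbhd (S (map x [0..<n]))" by blast
  have "(\<forall>m<n. x m = y m) \<longleftrightarrow> restr (c (Y x)) (L n) = restr (c (Y y)) (L n)"
    if x: "x \<in> ?P" and y: "y \<in> ?P" for x y n
  proof
    assume "\<forall>m<n. x m = y m"
    then show "restr (c (Y x)) (L n) = restr (c (Y y)) (L n)"
      using splitting_system_branches_agree[OF levels x _ Y[OF x] Y[OF y]] by blast
  next
    assume eq: "restr (c (Y x)) (L n) = restr (c (Y y)) (L n)"
    show "\<forall>m<n. x m = y m"
    proof (rule ccontr)
      assume "\<not> (\<forall>m<n. x m = y m)"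
      then obtain m where m: "m < n" "x m \<noteq> y m" and least: "\<forall>j<m. \<not> (j < n \<and> x j \<noteq> y j)"
        using exists_least_iff[of "\<lambda>m. m < n \<and> x m \<noteq> y m"] by blast
      from least m(1) have "\<forall>j<m. x j = y j" by auto
      then have "restr (c (Y x)) (L (Suc m)) \<noteq> restr (c (Y y)) (L (Suc m))"
        using splitting_system_branches_separated[OF levels x y _ m(2) Y[OF x] Y[OF y]] by blast
      moreover have "L (Suc m) \<le> L n"
        using m(1) splitting_levels_strict_mono[OF levels] by (simp add: strict_mono_less_eq)
      ultimately show False using restr_eq_mono[OF eq] by blast
    qed
  qed
  then show thesis by (rule that)
qed

lemma splitting_system_embedding:
  fixes c :: "('k::wellorder \<Rightarrow> 'm) \<Rightarrow> ('k \<Rightarrow> 'b)"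
  assumes levels: "\<forall>k. splitting_level c U L S k" and lub: "\<forall>n. L n \<le> lub"
  obtains i where "inj_on i (Pi UNIV (\<lambda>n. {..<L n}))"
    "i ` Pi UNIV (\<lambda>n. {..<L n}) \<subseteq> range (\<lambda>z. restr (c z) lub)"
    "\<forall>x\<in>Pi UNIV (\<lambda>n. {..<L n}). \<forall>y\<in>Pi UNIV (\<lambda>n. {..<L n}). \<forall>n.
       (\<forall>m<n. x m = y m) \<longleftrightarrow> restr_p (i x) (L n) = restr_p (i y) (L n)"
proof -
  obtain Y where Y: "\<And>x y n. x \<in> Pi UNIV (\<lambda>n. {..<L n}) \<Longrightarrow> y \<in> Pi UNIV (\<lambda>n. {..<L n}) \<Longrightarrow>
      (\<forall>m<n. x m = y m) \<longleftrightarrow> restr (c (Y x)) (L n) = restr (c (Y y)) (L n)"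
    using splitting_system_branches[OF levels] by blast
  define i where "i x = restr (c (Y x)) lub" for x
  have branches: "\<forall>x\<in>Pi UNIV (\<lambda>n. {..<L n}). \<forall>y\<in>Pi UNIV (\<lambda>n. {..<L n}). \<forall>n.
      (\<forall>m<n. x m = y m) \<longleftrightarrow> restr_p (i x) (L n) = restr_p (i y) (L n)"
    using Y lub by (simp add: i_def restr_p_restr)
  have "inj_on i (Pi UNIV (\<lambda>n. {..<L n}))"
  proof (rule inj_onI)
    fix x y assume "x \<in> Pi UNIV (\<lambda>n. {..<L n})" "y \<in> Pi UNIV (\<lambda>n. {..<L n})" "i x = i y"
    then have "\<forall>m<Suc n. x m = y m" for n using branches by simp
    then show "x = y" by auto
  qed
  moreover have "i ` Pi UNIV (\<lambda>n. {..<L n}) \<subseteq> range (\<lambda>z. restr (c z) lub)"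
    unfolding i_def by blast
  ultimately show thesis using branches by (rule that)
qed

section \<open>Splitting systems below a regular cardinal\<close>

lemma card_of_Times_same_ordLess_infinite:
  assumes "infinite C" "|A| <o |C|"
  shows "|A \<times> A| <o |C|"
proof (cases "finite A")
  case True
  then have "finite (A \<times> A)" by simp
  then show ?thesis
    using finite_ordLess_infinite[OF card_of_Well_order card_of_Well_order, unfolded Field_card_of]
      assms(1)
    by blast
next
  case False
  then show ?thesis using assms(2) card_of_Times_same_infinite ordIso_ordLess_trans by blast
qed

lemma card_of_Times_ordLess_infinite:
  assumes "infinite C" "|A| <o |C|" "|B| <o |C|"
  shows "|A \<times> B| <o |C|"
proof (cases "|A| \<le>o |B|")
  case True
  then have "|A \<times> B| \<le>o |B \<times> B|" by (rule card_of_Times_mono1)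
  then show ?thesis
    using card_of_Times_same_ordLess_infinite[OF assms(1,3)] by (rule ordLeq_ordLess_trans)
next
  case False
  then have "|A \<times> B| \<le>o |A \<times> A|"
    using not_ordLeq_iff_ordLess[OF card_of_Well_order card_of_Well_order]
    by (blast intro: card_of_Times_mono2 ordLess_imp_ordLeq)
  then show ?thesis
    using card_of_Times_same_ordLess_infinite[OF assms(1,2)] by (rule ordLeq_ordLess_trans)
qed

context
  assumes kappa: "regular_uncountable_type TYPE('k::wellorder)"
begin

lemma infinite_UNIV_kappa: "infinite (UNIV :: 'k set)"
  using kappa unfolding regular_uncountable_type_def by (auto dest: countable_finite)

lemma card_of_finite_ordLess: "finite A \<Longrightarrow> |A| <o |UNIV :: 'k set|"
  using finite_ordLess_infinite[OF card_of_Well_order card_of_Well_order, unfolded Field_card_of]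
    infinite_UNIV_kappa
  by blast

lemma card_of_lessThan_ordLess: "|{..<\<alpha>::'k}| <o |UNIV :: 'k set|"
  using kappa unfolding regular_uncountable_type_def is_cardinal_type_def by blast

lemma card_of_nat_ordLess: "|UNIV :: nat set| <o |UNIV :: 'k set|"
proof -
  have "\<not> |UNIV :: 'k set| \<le>o |UNIV :: nat set|"
    using kappa unfolding regular_uncountable_type_def countable_def card_of_ordLeq[symmetric]
    by blast
  then show ?thesis using not_ordLeq_iff_ordLess[OF card_of_Well_order card_of_Well_order] by blast
qed

lemma small_set_bounded:
  assumes "|A :: 'k set| <o |UNIV :: 'k set|"
  shows "\<exists>\<alpha>. \<forall>\<delta>\<in>A. \<delta> < \<alpha>"
proof (rule ccontr)
  assume "\<not> ?thesis"
  then have "unbounded A" unfolding unbounded_def by (meson not_le)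
  then have "|UNIV :: 'k set| \<le>o |A|"
    using kappa ordIso_iff_ordLeq unfolding regular_uncountable_type_def by blast
  then show False using assms not_ordLess_ordLeq by blast
qed

lemma unbounded_above_small_set:
  assumes "unbounded U" "|A :: 'k set| <o |UNIV :: 'k set|"
  shows "\<exists>u\<in>U. \<forall>\<delta>\<in>A. \<delta> < u"
proof -
  obtain \<alpha> where "\<forall>\<delta>\<in>A. \<delta> < \<alpha>" using small_set_bounded[OF assms(2)] by blast
  moreover obtain u where "u \<in> U" "\<alpha> \<le> u" using assms(1) unfolding unbounded_def by blast
  ultimately show ?thesis using less_le_trans by blast
qed

lemma nat_seq_has_lub:
  fixes L :: "nat \<Rightarrow> 'k"
  obtains lub where "\<forall>n. L n \<le> lub" "\<forall>\<beta>. (\<forall>n. L n \<le> \<beta>) \<longrightarrow> lub \<le> \<beta>"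
proof -
  have "|range L| <o |UNIV :: 'k set|"
    using card_of_image card_of_nat_ordLess by (rule ordLeq_ordLess_trans)
  then obtain \<alpha> where "\<forall>\<delta>\<in>range L. \<delta> < \<alpha>" using small_set_bounded by blast
  then have "\<forall>n. L n \<le> \<alpha>" by (simp add: less_imp_le)
  then have "\<forall>n. L n \<le> (LEAST \<beta>. \<forall>n. L n \<le> \<beta>)" by (rule LeastI)
  moreover have "\<forall>\<beta>. (\<forall>n. L n \<le> \<beta>) \<longrightarrow> (LEAST \<beta>. \<forall>n. L n \<le> \<beta>) \<le> \<beta>"
    by (auto intro: Least_le)
  ultimately show thesis by (rule that)
qed

lemma small_family_separated_below:
  fixes P :: "(('k \<Rightarrow> 'b) \<times> ('k \<Rightarrow> 'b)) set"
  assumes "|P| <o |UNIV :: 'k set|" "\<forall>(f, g)\<in>P. f \<noteq> g"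
  shows "\<exists>\<alpha>. \<forall>(f, g)\<in>P. restr f \<alpha> \<noteq> restr g \<alpha>"
proof -
  define \<delta> where "\<delta> p = (SOME \<delta>. fst p \<delta> \<noteq> snd p \<delta>)" for p :: "('k \<Rightarrow> 'b) \<times> ('k \<Rightarrow> 'b)"
  have \<delta>: "fst p (\<delta> p) \<noteq> snd p (\<delta> p)" if "p \<in> P" for p
  proof -
    have "\<exists>\<delta>. fst p \<delta> \<noteq> snd p \<delta>" using assms(2) that by (cases p) (auto simp: fun_eq_iff)
    then show ?thesis unfolding \<delta>_def by (rule someI_ex)
  qed
  have "|\<delta> ` P| <o |UNIV :: 'k set|"
    using card_of_image assms(1) by (rule ordLeq_ordLess_trans)
  then obtain \<alpha> where "\<forall>p\<in>P. \<delta> p < \<alpha>" using small_set_bounded by blast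
  with \<delta> have "\<forall>p\<in>P. restr (fst p) \<alpha> \<noteq> restr (snd p) \<alpha>" by (auto simp: restr_eq_iff)
  then show ?thesis by (intro exI[of _ \<alpha>]) (simp add: case_prod_beta)
qed

lemma inj_into_good_points:
  fixes c :: "('k \<Rightarrow> 'm) \<Rightarrow> ('k \<Rightarrow> 'b)" and l :: 'k
  assumes "big c s"
  shows "\<exists>F. inj_on F {..<l} \<and> F ` {..<l} \<subseteq> good_points c s"
proof -
  have "|{..<l}| <o |seqs_below :: ('k \<rightharpoonup> 'm) set|"
    using card_of_lessThan_ordLess card_of_UNIV_ordLeq_seqs_below by (rule ordLess_ordLeq_trans)
  also have "|seqs_below :: ('k \<rightharpoonup> 'm) set| <o |good_points c s|"
    using card_of_good_points[OF infinite_UNIV_kappa assms] .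
  finally show ?thesis using card_of_ordLeq ordLess_imp_ordLeq by blast
qed

lemma splitting_step:
  fixes c :: "('k \<Rightarrow> 'm) \<Rightarrow> ('k \<Rightarrow> 'b)" and S :: "'i \<Rightarrow> ('k \<rightharpoonup> 'm)"
  assumes U: "unbounded U"
    and cont: "continuous_map kappa_top kappa_top c"
    and I: "|I| <o |UNIV :: 'k set|"
    and S: "\<forall>\<sigma>\<in>I. S \<sigma> \<in> seqs_below \<and> big c (S \<sigma>)"
  obtains l' S' where "l' \<in> U" "l < l'"
    "\<forall>\<sigma>\<in>I. \<forall>a<l. S' (\<sigma>, a) \<in> seqs_below \<and> big c (S' (\<sigma>, a)) \<and> S \<sigma> \<subseteq>\<^sub>m S' (\<sigma>, a) \<and>
       determines c (S' (\<sigma>, a)) l'"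
    "\<forall>\<sigma>\<in>I. \<forall>a<l. \<forall>b<l. a \<noteq> b \<longrightarrow> separates c (S' (\<sigma>, a)) (S' (\<sigma>, b)) l'"
proof -
  have "\<exists>F. inj_on F {..<l} \<and> F ` {..<l} \<subseteq> good_points c (S \<sigma>)" if "\<sigma> \<in> I" for \<sigma>
    using inj_into_good_points S that by blast
  then obtain F where F: "\<forall>\<sigma>\<in>I. inj_on (F \<sigma>) {..<l} \<and> F \<sigma> ` {..<l} \<subseteq> good_points c (S \<sigma>)"
    by metis
  define P where "P = (\<lambda>(\<sigma>, a, b). (F \<sigma> a, F \<sigma> b)) ` {(\<sigma>, a, b). \<sigma> \<in> I \<and> a < l \<and> b < l \<and> a \<noteq> b}"
  have "|{(\<sigma>, a, b). \<sigma> \<in> I \<and> a < l \<and> b < l \<and> a \<noteq> b}| \<le>o |I \<times> {..<l} \<times> {..<l}|"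
    by (rule card_of_mono1) auto
  also have "|I \<times> {..<l} \<times> {..<l}| <o |UNIV :: 'k set|"
    using I card_of_lessThan_ordLess infinite_UNIV_kappa
    by (blast intro: card_of_Times_ordLess_infinite)
  finally have "|P| <o |UNIV :: 'k set|"
    unfolding P_def using card_of_image ordLeq_ordLess_trans by blast
  moreover have "\<forall>(f, g)\<in>P. f \<noteq> g"
    using F unfolding P_def inj_on_def by auto
  ultimately obtain \<alpha> where \<alpha>: "\<forall>(f, g)\<in>P. restr f \<alpha> \<noteq> restr g \<alpha>"
    using small_family_separated_below by blast
  obtain l' where l': "l' \<in> U" "\<alpha> < l'" "l < l'"
    using unbounded_above_small_set[OF U card_of_finite_ordLess, of "{\<alpha>, l}"]
    by auto
  have "\<exists>r\<in>seqs_below. S (fst p) \<subseteq>\<^sub>m r \<and> big c r \<and>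
          (\<forall>y\<in>basic_nbhd r. restr (c y) l' = restr (F (fst p) (snd p)) l')"
    if "p \<in> I \<times> {..<l}" for p
    using that F S by (intro good_points_refine[OF cont]) (auto simp: image_subset_iff)
  then obtain S' where S': "\<forall>p\<in>I \<times> {..<l}. S' p \<in> seqs_below \<and> S (fst p) \<subseteq>\<^sub>m S' p \<and> big c (S' p) \<and>
          (\<forall>y\<in>basic_nbhd (S' p). restr (c y) l' = restr (F (fst p) (snd p)) l')"
    by metis
  have "separates c (S' (\<sigma>, a)) (S' (\<sigma>, b)) l'"
    if "\<sigma> \<in> I" "a < l" "b < l" "a \<noteq> b" for \<sigma> a b
  proof -
    have "(F \<sigma> a, F \<sigma> b) \<in> P"
      unfolding P_def using that by (intro image_eqI[of _ _ "(\<sigma>, a, b)"]) auto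
    with \<alpha> \<open>\<alpha> < l'\<close> have "restr (F \<sigma> a) l' \<noteq> restr (F \<sigma> b) l'"
      using restr_eq_mono less_imp_le by blast
    with that S' show ?thesis unfolding separates_def by auto
  qed
  moreover have "determines c (S' (\<sigma>, a)) l'" if "\<sigma> \<in> I" "a < l" for \<sigma> a
    using that S' unfolding determines_def by auto
  ultimately show thesis using l' S' by (intro that[of l' S']) auto
qed

lemma card_of_bounded_lists: "|bounded_lists (L :: nat \<Rightarrow> 'k) k| <o |UNIV :: 'k set|"
proof (induction k)
  case 0
  show ?case by (simp add: card_of_finite_ordLess)
next
  case (Suc k)
  have "|bounded_lists L k \<times> {..<L k}| <o |UNIV :: 'k set|"
    using infinite_UNIV_kappa Suc.IH card_of_lessThan_ordLess
    by (rule card_of_Times_ordLess_infinite)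
  then show ?case
    unfolding bounded_lists_Suc using card_of_image ordLeq_ordLess_trans by blast
qed


lemma splitting_levels_extend:
  fixes c :: "('k \<Rightarrow> 'm) \<Rightarrow> ('k \<Rightarrow> 'b)"
  assumes U: "unbounded U"
    and cont: "continuous_map kappa_top kappa_top c"
    and levels: "\<forall>j\<le>k. splitting_level c U L S j"
  obtains L' S' where "\<forall>j\<le>Suc k. splitting_level c U L' S' j"
    "\<forall>m\<le>k. L' m = L m" "\<forall>\<sigma>. length \<sigma> \<le> k \<longrightarrow> S' \<sigma> = S \<sigma>"
proof -
  have "\<forall>\<sigma>\<in>bounded_lists L k. S \<sigma> \<in> seqs_below \<and> big c (S \<sigma>)"
    using splitting_level_nodes levels by blast
  then obtain l' S2 where l': "l' \<in> U" "L k < l'"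
    and S2: "\<forall>\<sigma>\<in>bounded_lists L k. \<forall>a<L k. S2 (\<sigma>, a) \<in> seqs_below \<and> big c (S2 (\<sigma>, a)) \<and>
               S \<sigma> \<subseteq>\<^sub>m S2 (\<sigma>, a) \<and> determines c (S2 (\<sigma>, a)) l'"
    and sep: "\<forall>\<sigma>\<in>bounded_lists L k. \<forall>a<L k. \<forall>b<L k. a \<noteq> b \<longrightarrow>
               separates c (S2 (\<sigma>, a)) (S2 (\<sigma>, b)) l'"
    by (rule splitting_step[OF U cont card_of_bounded_lists])
  define L' where "L' = L(Suc k := l')"
  define S' where "S' \<sigma> = (if length \<sigma> = Suc k then S2 (butlast \<sigma>, last \<sigma>) else S \<sigma>)" for \<sigma>
  have L'_eq: "\<forall>m\<le>k. L' m = L m" by (simp add: L'_def)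
  have S'_eq: "\<forall>\<sigma>. length \<sigma> \<le> k \<longrightarrow> S' \<sigma> = S \<sigma>" by (simp add: S'_def)
  have "splitting_level c U L' S' j" if "j \<le> k" for j
    using levels that splitting_level_cong[of j L' L S' S] L'_eq S'_eq by auto
  moreover have "splitting_level c U L' S' (Suc k)"
  proof -
    have "bounded_lists L' k = bounded_lists L k" by (rule bounded_lists_cong) (simp add: L'_def)
    moreover have "S' \<sigma> = S \<sigma>" "S' (\<sigma> @ [a]) = S2 (\<sigma>, a)" if "\<sigma> \<in> bounded_lists L k" for \<sigma> a
      using that by (simp_all add: S'_def length_bounded_lists)
    ultimately show ?thesis
      using l' S2 sep by (simp add: L'_def cong: ball_cong)
  qed
  ultimately have "\<forall>j\<le>Suc k. splitting_level c U L' S' j" by (auto simp: le_Suc_eq)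
  then show thesis using L'_eq S'_eq by (rule that)
qed

lemma splitting_system_exists:
  fixes c :: "('k \<Rightarrow> 'm) \<Rightarrow> ('k \<Rightarrow> 'b)"
  assumes U: "unbounded U"
    and cont: "continuous_map kappa_top kappa_top c"
    and root: "s \<in> seqs_below" "big c s"
  obtains L S where "\<forall>k. splitting_level c U L S k"
proof -
  have "good_points c s \<noteq> {}"
    using card_of_good_points[OF infinite_UNIV_kappa root(2)] card_of_empty not_ordLess_ordLeq
    by force
  then obtain z where "z \<in> good_points c s" by blast
  moreover obtain l0 where "l0 \<in> U" using U unfolding unbounded_def by blast
  ultimately obtain r where "r \<in> seqs_below" "big c r" "\<forall>y\<in>basic_nbhd r. restr (c y) l0 = restr z l0"
    using good_points_refine[OF cont root(1)] by blast
  with \<open>l0 \<in> U\<close> have level0: "splitting_level c U (\<lambda>_. l0) (\<lambda>_. r) 0"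
    by (simp add: determines_def)
  define P where "P n LS \<longleftrightarrow> (\<forall>j\<le>n. splitting_level c U (fst LS) (snd LS) j)"
    for n and LS :: "(nat \<Rightarrow> 'k) \<times> ('k list \<Rightarrow> ('k \<rightharpoonup> 'm))"
  define agree where "agree n LS LS' \<longleftrightarrow>
    (\<forall>m\<le>n. fst LS' m = fst LS m) \<and> (\<forall>\<sigma>. length \<sigma> \<le> n \<longrightarrow> snd LS' \<sigma> = snd LS \<sigma>)"
    for n and LS LS' :: "(nat \<Rightarrow> 'k) \<times> ('k list \<Rightarrow> ('k \<rightharpoonup> 'm))"
  have "P 0 (\<lambda>_. l0, \<lambda>_. r)" unfolding P_def using level0 by simp
  moreover have "\<exists>LS'. P (Suc n) LS' \<and> agree n LS LS'" if LS: "P n LS" for n LS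
  proof -
    obtain L' S' where "\<forall>j\<le>Suc n. splitting_level c U L' S' j"
      "\<forall>m\<le>n. L' m = fst LS m" "\<forall>\<sigma>. length \<sigma> \<le> n \<longrightarrow> S' \<sigma> = snd LS \<sigma>"
      by (rule splitting_levels_extend[OF U cont LS[unfolded P_def]])
    then show ?thesis unfolding P_def agree_def by (intro exI[of _ "(L', S')"]) simp
  qed
  ultimately obtain f where f: "\<And>n. P n (f n)" and coh: "\<And>n. agree n (f n) (f (Suc n))"
    using dependent_nat_choice[of P agree] by blast
  have L_coh: "fst (f n) m = fst (f m) m" if "m \<le> n" for m n
    using that by (induction n rule: dec_induct) (use coh in \<open>auto simp: agree_def\<close>)
  have S_coh: "snd (f n) \<sigma> = snd (f (length \<sigma>)) \<sigma>" if "length \<sigma> \<le> n" for \<sigma> n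
    using that by (induction n rule: dec_induct) (use coh in \<open>auto simp: agree_def\<close>)
  \<comment> \<open>Stage n is final on levels up to n, so the diagonal limit satisfies every level.\<close>
  define L where "L m = fst (f m) m" for m
  define S where "S \<sigma> = snd (f (length \<sigma>)) \<sigma>" for \<sigma>
  have "splitting_level c U L S k" for k
  proof -
    have "\<forall>m\<le>k. fst (f k) m = L m" using L_coh unfolding L_def by blast
    moreover have "\<forall>\<sigma>. length \<sigma> \<le> k \<longrightarrow> snd (f k) \<sigma> = S \<sigma>" using S_coh unfolding S_def by blast
    moreover have "splitting_level c U (fst (f k)) (snd (f k)) k" using f unfolding P_def by blast
    ultimately show ?thesis using splitting_level_cong by blast
  qed
  then show thesis by (intro that) blast
qed

end

theorem theorem7p1:
  fixes U :: "'k::wellorder set"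
    and T :: "('k \<rightharpoonup> 'k) set"
    and c :: "('k \<Rightarrow> 'm) \<Rightarrow> ('k \<Rightarrow> 'k)"
  assumes kappa: "regular_uncountable_type TYPE('k)"
    and U: "unbounded U"
    and T: "is_subtree T"
    and mu: "(card_of (seqs_below :: ('k \<rightharpoonup> 'm) set), card_of (body T)) \<in> ordLess"
    and cont: "continuous_map (kappa_top :: ('k \<Rightarrow> 'm) topology) (subtopology kappa_top (body T)) c"
    and surj: "c ` UNIV = body T"
  shows "\<exists>(lam :: nat \<Rightarrow> 'k) (sup_lam :: 'k) (i :: (nat \<Rightarrow> 'k) \<Rightarrow> ('k \<rightharpoonup> 'k)).
           strict_mono lam \<and> range lam \<subseteq> U \<and>
           (\<forall>n. lam n \<le> sup_lam) \<and> (\<forall>\<beta>. (\<forall>n. lam n \<le> \<beta>) \<longrightarrow> sup_lam \<le> \<beta>) \<and>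
           inj_on i (Pi UNIV (\<lambda>n. {..<lam n})) \<and>
           i ` (Pi UNIV (\<lambda>n. {..<lam n})) \<subseteq> level T sup_lam \<and>
           (\<forall>x\<in>Pi UNIV (\<lambda>n. {..<lam n}). \<forall>y\<in>Pi UNIV (\<lambda>n. {..<lam n}). \<forall>n::nat.
              (\<forall>m<n. x m = y m) \<longleftrightarrow> restr_p (i x) (lam n) = restr_p (i y) (lam n))"
proof -
  have "continuous_map kappa_top kappa_top c"
    using cont by (simp add: continuous_map_in_subtopology)
  moreover have "big c Map.empty" using mu surj by (simp add: big_def)
  ultimately obtain L S where levels: "\<forall>k. splitting_level c U L S k"
    using splitting_system_exists[OF kappa U _ Map_empty_in_seqs_below] by blast
  obtain lub where lub: "\<forall>n. L n \<le> lub" "\<forall>\<beta>. (\<forall>n. L n \<le> \<beta>) \<longrightarrow> lub \<le> \<beta>"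
    using nat_seq_has_lub[OF kappa] by blast
  obtain i where i: "inj_on i (Pi UNIV (\<lambda>n. {..<L n}))"
    "i ` Pi UNIV (\<lambda>n. {..<L n}) \<subseteq> range (\<lambda>z. restr (c z) lub)"
    "\<forall>x\<in>Pi UNIV (\<lambda>n. {..<L n}). \<forall>y\<in>Pi UNIV (\<lambda>n. {..<L n}). \<forall>n.
       (\<forall>m<n. x m = y m) \<longleftrightarrow> restr_p (i x) (L n) = restr_p (i y) (L n)"
    by (rule splitting_system_embedding[OF levels lub(1)])
  have "range (\<lambda>z. restr (c z) lub) \<subseteq> level T lub"
    using surj restr_in_level by blast
  with i(2) have "i ` Pi UNIV (\<lambda>n. {..<L n}) \<subseteq> level T lub" by (rule subset_trans)
  then show ?thesis
    using splitting_levels_strict_mono[OF levels] splitting_levels_range[OF levels] lub i(1,3)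
    by blast
qed

end
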